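(* Let $\mathcal{K}\subset\mathbb{R}^n$ be a compact convex set and let $\phi:\mathcal{K}\to\mathbb{R}$ be continuous. Then for every $\varepsilon>0$ there exist a positive integer $p$ and, with $T=1/p$, a function $f_T\in\mathrm{DLSE}_T$ with rational parameters such that $|f_T(\mathbf{x})-\phi(\mathbf{x})|\leqslant\varepsilon$ for all $\mathbf{x}\in\mathcal{K}$.
   Context: For $T>0$, $\mathrm{LSE}_T$ denotes the class of functions $f_T:\mathbb{R}^n\to\mathbb{R}$ of the form $$f_T(\mathbf{x})=T\log\Big(\sum_{k=1}^K \exp\big(\langle\boldsymbol{\alpha}^{(k)},\mathbf{x}\rangle/T+\beta_k/T\big)\Big)$$ for some positive integer $K$, vectors $\boldsymbol{\alpha}^{(k)}\in\mathbb{R}^n$ and real numbers $\beta_k$. Such a function has rational parameters if $T$ is rational and it can be written in this form with all entries of the $\boldsymbol{\alpha}^{(k)}$ and all $\beta_k$ rational. $\mathrm{DLSE}_T$ is the class of functions $g_T-h_T$ with $g_T,h_T\in\mathrm{LSE}_T$ (same $T$); such a function has rational parameters if $g_T$ and $h_T$ both have rational parameters. *)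

theory Defs
  imports "HOL-Analysis.Analysis"
begin

definition lse :: "real \<Rightarrow> ((real^'n) \<times> real) list \<Rightarrow> real^'n \<Rightarrow> real" where
  "lse T ps x = T * ln (\<Sum>(a, b)\<leftarrow>ps. exp (inner a x / T + b / T))"

definition LSE_rat :: "real \<Rightarrow> (real^'n \<Rightarrow> real) \<Rightarrow> bool" where
  "LSE_rat T f \<longleftrightarrow> T > 0 \<and> T \<in> \<rat> \<and>
     (\<exists>ps. ps \<noteq> [] \<and> (\<forall>(a, b)\<in>set ps. (\<forall>i. a $ i \<in> \<rat>) \<and> b \<in> \<rat>) \<and> f = lse T ps)"

definition DLSE_rat :: "real \<Rightarrow> (real^'n \<Rightarrow> real) \<Rightarrow> bool" where
  "DLSE_rat T f \<longleftrightarrow> (\<exists>g h. LSE_rat T g \<and> LSE_rat T h \<and> f = (\<lambda>x. g x - h x))"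

end

theory Submission imports Defs begin

text \<open>Write \<open>\<phi> = g - h\<close> with \<open>g x = \<phi> x + L |x|\<^sup>2\<close> and \<open>h x = L |x|\<^sup>2\<close>. Since \<open>\<phi>\<close> is bounded
  and uniformly continuous on \<open>K\<close>, \<open>|\<phi> x - \<phi> c| \<le> \<epsilon> + L |x - c|\<^sup>2\<close> once \<open>L\<close> is large. Hence \<open>g\<close>
  is uniformly close to the maximum of the affine functions \<open>\<phi> c + L (|x|\<^sup>2 - |x - c|\<^sup>2)\<close>, with
  \<open>c\<close> running through a fine finite net of \<open>K\<close>, and likewise \<open>h\<close> to the maximum of
  \<open>L (|x|\<^sup>2 - |x - c|\<^sup>2)\<close>. Perturbing the parameters of these affine functions to rational ones
  costs little on the bounded set \<open>K\<close>, and at temperature \<open>T\<close> a log-sum-exp of \<open>N\<close> affine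
  functions lies between their maximum and that maximum plus \<open>T ln N\<close>.\<close>

definition affine_piece :: "('a::real_inner \<times> real) \<Rightarrow> 'a \<Rightarrow> real" where
  "affine_piece ab x = inner (fst ab) x + snd ab"

definition max_affine :: "('a::real_inner \<times> real) list \<Rightarrow> 'a \<Rightarrow> real" where
  "max_affine ps x = Max ((\<lambda>ab. affine_piece ab x) ` set ps)"

lemma affine_piece_Pair [simp]: "affine_piece (a, b) x = inner a x + b"
  by (simp add: affine_piece_def)

lemma affine_piece_le_max_affine: "ab \<in> set ps \<Longrightarrow> affine_piece ab x \<le> max_affine ps x"
  unfolding max_affine_def by (rule Max_ge) auto

lemma max_affine_le_iff:
  "ps \<noteq> [] \<Longrightarrow> max_affine ps x \<le> y \<longleftrightarrow> (\<forall>ab\<in>set ps. affine_piece ab x \<le> y)"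
  unfolding max_affine_def by (subst Max_le_iff) auto

lemma max_affine_attained:
  assumes "ps \<noteq> []"
  obtains ab where "ab \<in> set ps" "max_affine ps x = affine_piece ab x"
proof -
  have "max_affine ps x \<in> (\<lambda>ab. affine_piece ab x) ` set ps"
    unfolding max_affine_def using assms by (intro Max_in) auto
  then show thesis using that by blast
qed

lemma abs_max_affine_diff_le:
  assumes "ps \<noteq> []"
    and "\<And>ab. ab \<in> set ps \<Longrightarrow> affine_piece ab x \<le> y + \<eta>"
    and "ab\<^sub>0 \<in> set ps" "y - \<eta> \<le> affine_piece ab\<^sub>0 x"
  shows "\<bar>max_affine ps x - y\<bar> \<le> \<eta>"
proof -
  have "max_affine ps x \<le> y + \<eta>"
    using assms(1,2) by (simp add: max_affine_le_iff)
  moreover have "affine_piece ab\<^sub>0 x \<le> max_affine ps x"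
    using assms(3) by (rule affine_piece_le_max_affine)
  ultimately show ?thesis
    using assms(4) by linarith
qed

lemma max_affine_perturb:
  assumes "ps \<noteq> []" and "\<And>ab. ab \<in> set ps \<Longrightarrow> \<bar>affine_piece (R ab) x - affine_piece ab x\<bar> \<le> \<eta>"
  shows "\<bar>max_affine (map R ps) x - max_affine ps x\<bar> \<le> \<eta>"
proof -
  obtain ab\<^sub>0 where ab\<^sub>0: "ab\<^sub>0 \<in> set ps" "max_affine ps x = affine_piece ab\<^sub>0 x"
    using max_affine_attained[OF assms(1)] by blast
  show ?thesis
  proof (rule abs_max_affine_diff_le)
    show "R ab\<^sub>0 \<in> set (map R ps)" using ab\<^sub>0(1) by simp
    show "max_affine ps x - \<eta> \<le> affine_piece (R ab\<^sub>0) x"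
      using assms(2)[OF ab\<^sub>0(1)] ab\<^sub>0(2) by linarith
    fix ab assume "ab \<in> set (map R ps)"
    then obtain ab' where "ab' \<in> set ps" "ab = R ab'" by auto
    then show "affine_piece ab x \<le> max_affine ps x + \<eta>"
      using assms(2) affine_piece_le_max_affine[of ab' ps x] by fastforce
  qed (use assms(1) in simp)
qed

lemma lse_eq_affine_pieces:
  "lse T ps x = T * ln (\<Sum>ab\<leftarrow>ps. exp (affine_piece ab x / T))"
  unfolding lse_def by (simp add: case_prod_unfold affine_piece_def add_divide_distrib)

lemma affine_piece_le_lse:
  assumes "T > 0" and "ab \<in> set ps"
  shows "affine_piece ab x \<le> lse T ps x"
proof -
  let ?S = "\<Sum>ab\<leftarrow>ps. exp (affine_piece ab x / T)"
  have "exp (affine_piece ab x / T) \<le> ?S"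
    using assms(2) by (intro member_le_sum_list) auto
  then have "affine_piece ab x / T \<le> ln ?S"
    by (metis exp_gt_zero ln_exp ln_le_cancel_iff order_less_le_trans)
  then show ?thesis
    unfolding lse_eq_affine_pieces using assms(1) by (simp add: pos_divide_le_eq mult.commute)
qed

lemma lse_le_max_affine:
  assumes "T > 0" and "ps \<noteq> []"
  shows "lse T ps x \<le> max_affine ps x + T * ln (length ps)"
proof -
  let ?S = "\<Sum>ab\<leftarrow>ps. exp (affine_piece ab x / T)" and ?M = "max_affine ps x"
  obtain ab where "ab \<in> set ps"
    using assms(2) by (cases ps) auto
  then have "exp (affine_piece ab x / T) \<le> ?S"
    by (intro member_le_sum_list) auto
  then have "0 < ?S"
    by (rule less_le_trans[OF exp_gt_zero])
  have "?S \<le> (\<Sum>ab\<leftarrow>ps. exp (?M / T))"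
    using assms(1) by (intro sum_list_mono) (simp add: divide_right_mono affine_piece_le_max_affine)
  also have "\<dots> = length ps * exp (?M / T)"
    by (simp add: sum_list_triv)
  finally have "ln ?S \<le> ln (length ps * exp (?M / T))"
    using \<open>0 < ?S\<close> by (rule ln_mono)
  also have "\<dots> = ln (length ps) + ?M / T"
    using assms(2) by (simp add: ln_mult)
  finally show ?thesis
    unfolding lse_eq_affine_pieces using assms(1) by (simp add: field_simps)
qed

lemma lse_uniform_approx:
  assumes "T > 0" "ps \<noteq> []" "\<bar>max_affine ps x - y\<bar> \<le> \<eta>"
  shows "\<bar>lse T ps x - y\<bar> \<le> \<eta> + T * ln (length ps)"
proof -
  obtain ab where "ab \<in> set ps" "max_affine ps x = affine_piece ab x"
    using max_affine_attained[OF assms(2)] by blast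
  then have "max_affine ps x \<le> lse T ps x"
    using affine_piece_le_lse[OF assms(1)] by metis
  moreover have "0 \<le> T * ln (length ps)"
    using assms(1,2) by (cases ps) auto
  ultimately show ?thesis
    using lse_le_max_affine[OF assms(1,2), of x] assms(3) by linarith
qed

definition rational_pieces :: "((real^'n) \<times> real) list \<Rightarrow> bool" where
  "rational_pieces ps \<longleftrightarrow> (\<forall>(a, b)\<in>set ps. (\<forall>i. a $ i \<in> \<rat>) \<and> b \<in> \<rat>)"

lemma DLSE_rat_lse_diff:
  assumes "T > 0" "T \<in> \<rat>" "ps \<noteq> []" "qs \<noteq> []" "rational_pieces ps" "rational_pieces qs"
  shows "DLSE_rat T (\<lambda>x. lse T ps x - lse T qs x)"
  using assms unfolding DLSE_rat_def LSE_rat_def rational_pieces_def by blast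

lemma rational_vector_approximation:
  fixes v :: "real^'n"
  assumes "e > 0"
  obtains w where "\<And>i. w $ i \<in> \<rat>" "norm (w - v) < e"
proof -
  define e' where "e' = e / (CARD('n) + 1)"
  have "e' > 0" using assms by (simp add: e'_def)
  then have "\<forall>i. \<exists>q. q \<in> \<rat> \<and> \<bar>q - v $ i\<bar> < e'"
    by (metis rational_approximation)
  then obtain w :: "real^'n" where w: "\<And>i. w $ i \<in> \<rat>" "\<And>i. \<bar>w $ i - v $ i\<bar> < e'"
    by (auto simp: lambda_skolem)
  have "norm (w - v) \<le> (\<Sum>i\<in>UNIV. \<bar>(w - v) $ i\<bar>)"
    by (rule norm_le_l1_cart)
  also have "\<dots> \<le> CARD('n) * e'"
    using w(2) by (intro sum_bounded_above) (simp add: less_imp_le)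
  also have "\<dots> < e"
    using assms by (simp add: e'_def field_simps)
  finally show thesis using that w(1) by blast
qed

lemma rational_affine_piece_approx:
  fixes ab :: "(real^'n) \<times> real"
  assumes "bounded K" and "\<eta> > 0"
  obtains ab' where "\<forall>i. fst ab' $ i \<in> \<rat>" "snd ab' \<in> \<rat>"
    "\<And>x. x \<in> K \<Longrightarrow> \<bar>affine_piece ab' x - affine_piece ab x\<bar> \<le> \<eta>"
proof -
  obtain B where B: "B > 0" "\<And>x. x \<in> K \<Longrightarrow> norm x \<le> B"
    using assms(1) by (auto simp: bounded_pos)
  obtain a' where a': "\<And>i. a' $ i \<in> \<rat>" "norm (a' - fst ab) < \<eta> / (2 * B)"
    using rational_vector_approximation[of "\<eta> / (2 * B)"] assms(2) B(1) by auto
  obtain b' where b': "b' \<in> \<rat>" "\<bar>b' - snd ab\<bar> < \<eta> / 2"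
    using rational_approximation[of "\<eta> / 2"] assms(2) by auto
  have "\<bar>affine_piece (a', b') x - affine_piece ab x\<bar> \<le> \<eta>" if "x \<in> K" for x
  proof -
    have "\<bar>inner (a' - fst ab) x\<bar> \<le> norm (a' - fst ab) * norm x"
      by (rule Cauchy_Schwarz_ineq2)
    also have "\<dots> \<le> \<eta> / (2 * B) * B"
      using a'(2) B(2)[OF that] assms(2) B(1) by (intro mult_mono) auto
    also have "\<dots> = \<eta> / 2"
      using B(1) by simp
    finally have "\<bar>inner (a' - fst ab) x\<bar> \<le> \<eta> / 2" .
    moreover have "affine_piece (a', b') x - affine_piece ab x = inner (a' - fst ab) x + (b' - snd ab)"
      by (simp add: affine_piece_def inner_diff_left)
    ultimately show ?thesis
      using b'(2) abs_triangle_ineq[of "inner (a' - fst ab) x" "b' - snd ab"] by linarith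
  qed
  then show thesis using that[of "(a', b')"] a'(1) b'(1) by simp
qed

lemma rational_max_affine_approx:
  fixes ps :: "((real^'n) \<times> real) list"
  assumes "bounded K" and "\<eta> > 0" and "ps \<noteq> []"
  obtains qs where "qs \<noteq> []" "rational_pieces qs"
    "\<And>x. x \<in> K \<Longrightarrow> \<bar>max_affine qs x - max_affine ps x\<bar> \<le> \<eta>"
proof -
  have "\<forall>ab. \<exists>ab'. (\<forall>i. fst ab' $ i \<in> \<rat>) \<and> snd ab' \<in> \<rat> \<and>
          (\<forall>x\<in>K. \<bar>affine_piece ab' x - affine_piece ab x\<bar> \<le> \<eta>)"
    by (metis rational_affine_piece_approx[OF assms(1,2)])
  then obtain R where R: "\<And>ab i. fst (R ab) $ i \<in> \<rat>" "\<And>ab. snd (R ab) \<in> \<rat>"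
    "\<And>ab x. x \<in> K \<Longrightarrow> \<bar>affine_piece (R ab) x - affine_piece ab x\<bar> \<le> \<eta>"
    by metis
  show thesis
  proof (rule that[of "map R ps"])
    show "map R ps \<noteq> []" using assms(3) by simp
    show "rational_pieces (map R ps)"
      using R(1,2) by (auto simp: rational_pieces_def case_prod_unfold)
    show "\<bar>max_affine (map R ps) x - max_affine ps x\<bar> \<le> \<eta>" if "x \<in> K" for x
      using assms(3) R(3)[OF that] by (rule max_affine_perturb)
  qed
qed

lemma continuous_on_compact_quadratic_modulus:
  fixes \<phi> :: "'a::metric_space \<Rightarrow> real"
  assumes "compact K" and "continuous_on K \<phi>" and "\<epsilon> > 0"
  obtains L where "L \<ge> 0" "\<And>x y. x \<in> K \<Longrightarrow> y \<in> K \<Longrightarrow> \<bar>\<phi> x - \<phi> y\<bar> \<le> \<epsilon> + L * (dist x y)\<^sup>2"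
proof -
  obtain M where M: "\<And>x. x \<in> K \<Longrightarrow> \<bar>\<phi> x\<bar> \<le> M"
    using compact_imp_bounded[OF compact_continuous_image[OF assms(2,1)]]
    by (auto simp: bounded_iff)
  obtain r where r: "r > 0" "\<And>x y. x \<in> K \<Longrightarrow> y \<in> K \<Longrightarrow> dist x y < r \<Longrightarrow> \<bar>\<phi> x - \<phi> y\<bar> < \<epsilon>"
    using compact_uniformly_continuous[OF assms(2,1)] assms(3)
    unfolding uniformly_continuous_on_def dist_real_def by metis
  define L where "L = 2 * \<bar>M\<bar> / r\<^sup>2"
  have "L \<ge> 0" by (simp add: L_def)
  moreover have "\<bar>\<phi> x - \<phi> y\<bar> \<le> \<epsilon> + L * (dist x y)\<^sup>2" if "x \<in> K" "y \<in> K" for x y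
  proof (cases "dist x y < r")
    case True
    moreover have "0 \<le> L * (dist x y)\<^sup>2" using \<open>L \<ge> 0\<close> by simp
    ultimately show ?thesis using r(2)[OF that] by linarith
  next
    case False
    then have "r\<^sup>2 \<le> (dist x y)\<^sup>2"
      using r(1) by (intro power_mono) auto
    then have "2 * \<bar>M\<bar> \<le> L * (dist x y)\<^sup>2"
      using r(1) by (simp add: L_def field_simps mult_left_mono)
    then show ?thesis using M[OF that(1)] M[OF that(2)] assms(3) by linarith
  qed
  ultimately show thesis using that by blast
qed

definition paraboloid_piece :: "real \<Rightarrow> 'a::real_inner \<Rightarrow> real \<Rightarrow> 'a \<times> real" where
  "paraboloid_piece L c \<beta> = ((2 * L) *\<^sub>R c, \<beta> - L * inner c c)"

lemma affine_paraboloid_piece: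
  "affine_piece (paraboloid_piece L c \<beta>) x = \<beta> + L * inner x x - L * (dist x c)\<^sup>2"
  by (simp add: paraboloid_piece_def dist_norm power2_norm_eq_inner inner_commute algebra_simps)

lemma abs_max_affine_paraboloid_pieces_le:
  assumes "c\<^sub>0 \<in> set cs" "L * (dist x c\<^sub>0)\<^sup>2 \<le> \<epsilon> / 4"
    and modulus: "\<And>c. c \<in> set cs \<Longrightarrow> \<bar>\<beta> x - \<beta> c\<bar> \<le> \<epsilon> / 2 + L * (dist x c)\<^sup>2"
  shows "\<bar>max_affine (map (\<lambda>c. paraboloid_piece L c (\<beta> c)) cs) x - (\<beta> x + L * inner x x)\<bar> \<le> \<epsilon>"
proof (rule abs_max_affine_diff_le)
  show "paraboloid_piece L c\<^sub>0 (\<beta> c\<^sub>0) \<in> set (map (\<lambda>c. paraboloid_piece L c (\<beta> c)) cs)"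
    using assms(1) by simp
  show "\<beta> x + L * inner x x - \<epsilon> \<le> affine_piece (paraboloid_piece L c\<^sub>0 (\<beta> c\<^sub>0)) x"
    using modulus[OF assms(1)] assms(2) unfolding affine_paraboloid_piece by linarith
next
  fix ab assume "ab \<in> set (map (\<lambda>c. paraboloid_piece L c (\<beta> c)) cs)"
  then obtain c where "c \<in> set cs" and ab: "ab = paraboloid_piece L c (\<beta> c)"
    by auto
  have "0 \<le> \<epsilon>"
    using assms(2) modulus[OF assms(1)] by linarith
  then show "affine_piece ab x \<le> \<beta> x + L * inner x x + \<epsilon>"
    using modulus[OF \<open>c \<in> set cs\<close>] unfolding ab affine_paraboloid_piece by linarith
qed (use assms(1) in auto)

lemma max_affine_quadratic_lift:
  fixes \<phi> :: "'a::real_inner \<Rightarrow> real"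
  assumes "compact K" and "continuous_on K \<phi>" and "\<epsilon> > 0"
  obtains ps qs L where "ps \<noteq> []" "qs \<noteq> []"
    "\<And>x. x \<in> K \<Longrightarrow> \<bar>max_affine ps x - (\<phi> x + L * inner x x)\<bar> \<le> \<epsilon>"
    "\<And>x. x \<in> K \<Longrightarrow> \<bar>max_affine qs x - L * inner x x\<bar> \<le> \<epsilon>"
proof (cases "K = {}")
  case True
  then show thesis using that[of "[(0, 0)]" "[(0, 0)]"] by simp
next
  case False
  obtain L where "L \<ge> 0"
    and modulus: "\<And>x y. x \<in> K \<Longrightarrow> y \<in> K \<Longrightarrow> \<bar>\<phi> x - \<phi> y\<bar> \<le> \<epsilon> / 2 + L * (dist x y)\<^sup>2"
    using continuous_on_compact_quadratic_modulus[OF assms(1,2), of "\<epsilon> / 2"] assms(3) by auto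
  define h where "h = sqrt (\<epsilon> / (4 * (L + 1)))"
  have "h > 0" "L * h\<^sup>2 \<le> \<epsilon> / 4"
    using assms(3) \<open>L \<ge> 0\<close> by (simp_all add: h_def field_simps)
  obtain C where "C \<subseteq> K" "finite C" and cover: "K \<subseteq> (\<Union>c\<in>C. ball c h)"
    using compactE_image[OF assms(1), of K "\<lambda>c. ball c h"] \<open>h > 0\<close> by force
  obtain cs where cs: "set cs = C"
    using finite_list[OF \<open>finite C\<close>] by blast
  have near: "\<exists>c\<in>set cs. L * (dist x c)\<^sup>2 \<le> \<epsilon> / 4" if x: "x \<in> K" for x
  proof -
    obtain c where "c \<in> set cs" "dist x c < h"
      using cover x cs by (force simp: dist_commute)
    then have "L * (dist x c)\<^sup>2 \<le> L * h\<^sup>2"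
      using \<open>L \<ge> 0\<close> by (intro mult_left_mono power_mono) auto
    then show ?thesis using \<open>c \<in> set cs\<close> \<open>L * h\<^sup>2 \<le> \<epsilon> / 4\<close> by (meson order_trans)
  qed
  show thesis
  proof (rule that[of "map (\<lambda>c. paraboloid_piece L c (\<phi> c)) cs" "map (\<lambda>c. paraboloid_piece L c 0) cs" L])
    show "map (\<lambda>c. paraboloid_piece L c (\<phi> c)) cs \<noteq> []" "map (\<lambda>c. paraboloid_piece L c 0) cs \<noteq> []"
      using False cover cs by auto
  next
    fix x assume "x \<in> K"
    then obtain c\<^sub>0 where c\<^sub>0: "c\<^sub>0 \<in> set cs" "L * (dist x c\<^sub>0)\<^sup>2 \<le> \<epsilon> / 4"
      using near by blast
    then show "\<bar>max_affine (map (\<lambda>c. paraboloid_piece L c (\<phi> c)) cs) x - (\<phi> x + L * inner x x)\<bar> \<le> \<epsilon>"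
      using modulus \<open>x \<in> K\<close> cs \<open>C \<subseteq> K\<close> by (intro abs_max_affine_paraboloid_pieces_le) auto
    show "\<bar>max_affine (map (\<lambda>c. paraboloid_piece L c 0) cs) x - L * inner x x\<bar> \<le> \<epsilon>"
      using abs_max_affine_paraboloid_pieces_le[where \<beta> = "\<lambda>_. 0", OF c\<^sub>0] \<open>L \<ge> 0\<close> assms(3)
      by (simp add: add_nonneg_nonneg)
  qed
qed

lemma rational_max_affine_quadratic_lift:
  fixes \<phi> :: "real^'n \<Rightarrow> real"
  assumes "compact K" and "continuous_on K \<phi>" and "\<epsilon> > 0"
  obtains ps qs L where "ps \<noteq> []" "qs \<noteq> []" "rational_pieces ps" "rational_pieces qs"
    "\<And>x. x \<in> K \<Longrightarrow> \<bar>max_affine ps x - (\<phi> x + L * inner x x)\<bar> \<le> \<epsilon>"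
    "\<And>x. x \<in> K \<Longrightarrow> \<bar>max_affine qs x - L * inner x x\<bar> \<le> \<epsilon>"
proof -
  have "bounded K" "\<epsilon> / 2 > 0"
    using assms(1,3) by (simp_all add: compact_imp_bounded)
  obtain ps qs L where "ps \<noteq> []" "qs \<noteq> []"
    and g: "\<And>x. x \<in> K \<Longrightarrow> \<bar>max_affine ps x - (\<phi> x + L * inner x x)\<bar> \<le> \<epsilon> / 2"
    and h: "\<And>x. x \<in> K \<Longrightarrow> \<bar>max_affine qs x - L * inner x x\<bar> \<le> \<epsilon> / 2"
    using max_affine_quadratic_lift[OF assms(1,2) \<open>\<epsilon> / 2 > 0\<close>] by blast
  obtain ps' where "ps' \<noteq> []" "rational_pieces ps'"
    and g': "\<And>x. x \<in> K \<Longrightarrow> \<bar>max_affine ps' x - max_affine ps x\<bar> \<le> \<epsilon> / 2"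
    using rational_max_affine_approx[OF \<open>bounded K\<close> \<open>\<epsilon> / 2 > 0\<close> \<open>ps \<noteq> []\<close>] by blast
  obtain qs' where "qs' \<noteq> []" "rational_pieces qs'"
    and h': "\<And>x. x \<in> K \<Longrightarrow> \<bar>max_affine qs' x - max_affine qs x\<bar> \<le> \<epsilon> / 2"
    using rational_max_affine_approx[OF \<open>bounded K\<close> \<open>\<epsilon> / 2 > 0\<close> \<open>qs \<noteq> []\<close>] by blast
  show thesis
  proof (rule that[of ps' qs' L])
    fix x assume "x \<in> K"
    show "\<bar>max_affine ps' x - (\<phi> x + L * inner x x)\<bar> \<le> \<epsilon>"
      using g[OF \<open>x \<in> K\<close>] g'[OF \<open>x \<in> K\<close>] by linarith
    show "\<bar>max_affine qs' x - L * inner x x\<bar> \<le> \<epsilon>"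
      using h[OF \<open>x \<in> K\<close>] h'[OF \<open>x \<in> K\<close>] by linarith
  qed fact+
qed

theorem theorem2:
  fixes K :: "(real^'n) set" and \<phi> :: "real^'n \<Rightarrow> real" and \<epsilon> :: real
  assumes "compact K" and "convex K" and "continuous_on K \<phi>" and "\<epsilon> > 0"
  shows "\<exists>p::nat. p > 0 \<and> (\<exists>f. DLSE_rat (1 / real p) f \<and>
           (\<forall>x\<in>K. \<bar>f x - \<phi> x\<bar> \<le> \<epsilon>))"
proof -
  have "\<epsilon> / 4 > 0"
    using assms(4) by simp
  obtain ps qs L where ne: "ps \<noteq> []" "qs \<noteq> []" and rat: "rational_pieces ps" "rational_pieces qs"
    and g: "\<And>x. x \<in> K \<Longrightarrow> \<bar>max_affine ps x - (\<phi> x + L * inner x x)\<bar> \<le> \<epsilon> / 4"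
    and h: "\<And>x. x \<in> K \<Longrightarrow> \<bar>max_affine qs x - L * inner x x\<bar> \<le> \<epsilon> / 4"
    using rational_max_affine_quadratic_lift[OF assms(1,3) \<open>\<epsilon> / 4 > 0\<close>] by blast
  have "\<forall>\<^sub>F p in sequentially.
          0 < p \<and> ln (length ps) / real p < \<epsilon> / 4 \<and> ln (length qs) / real p < \<epsilon> / 4"
    using eventually_gt_at_top[of 0]
      order_tendstoD(2)[OF lim_const_over_n \<open>\<epsilon> / 4 > 0\<close>, of "ln (length ps)"]
      order_tendstoD(2)[OF lim_const_over_n \<open>\<epsilon> / 4 > 0\<close>, of "ln (length qs)"]
    by eventually_elim simp
  then obtain p :: nat where p: "0 < p" "ln (length ps) / p < \<epsilon> / 4" "ln (length qs) / p < \<epsilon> / 4"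
    using eventually_happens'[OF sequentially_bot] by blast
  define T where "T = 1 / real p"
  have T: "T > 0" "T \<in> \<rat>" "T * ln (length ps) < \<epsilon> / 4" "T * ln (length qs) < \<epsilon> / 4"
    using p by (simp_all add: T_def)
  have "\<bar>(lse T ps x - lse T qs x) - \<phi> x\<bar> \<le> \<epsilon>" if "x \<in> K" for x
    using lse_uniform_approx[OF T(1) ne(1) g[OF that]] lse_uniform_approx[OF T(1) ne(2) h[OF that]] T(3,4)
    by linarith
  then show ?thesis
    using DLSE_rat_lse_diff[OF T(1,2) ne rat] p(1) unfolding T_def by blast
qed

end
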